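(* Let $N\ge 1$, let $a_1,\dots,a_N>0$, $T_1,\dots,T_N\ge 0$ and $P_{\mathrm{tot}}>0$. For $P_i\ge 0$ let $r_i(P_i)=\log_2(1+a_iP_i)$ and $J(\mathbf P)=\sum_{i=1}^N (r_i(P_i)-T_i)^2$. Consider the problem of minimizing $J(\mathbf P)$ subject to $\sum_{i=1}^N P_i\le P_{\mathrm{tot}}$ and $P_i\ge 0$ for all $i$. Define $\bar P_i=(2^{T_i}-1)/a_i$, which is the unique power with $r_i(\bar P_i)=T_i$. Then every optimal solution $\mathbf P^*$ of this problem satisfies $P_i^*\le \bar P_i$ for all $i$. *)

theory Defs
  imports Complex_Main
begin

definition rate :: "real \<Rightarrow> real \<Rightarrow> real" where
  "rate a p = log 2 (1 + a * p)"

definition J :: "nat \<Rightarrow> (nat \<Rightarrow> real) \<Rightarrow> (nat \<Rightarrow> real) \<Rightarrow> (nat \<Rightarrow> real) \<Rightarrow> real" where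
  "J N a T P = (\<Sum>i<N. (rate (a i) (P i) - T i)^2)"

definition feasible :: "nat \<Rightarrow> real \<Rightarrow> (nat \<Rightarrow> real) \<Rightarrow> bool" where
  "feasible N Ptot P \<longleftrightarrow> (\<Sum>i<N. P i) \<le> Ptot \<and> (\<forall>i<N. P i \<ge> 0)"

definition optimal :: "nat \<Rightarrow> (nat \<Rightarrow> real) \<Rightarrow> (nat \<Rightarrow> real) \<Rightarrow> real \<Rightarrow> (nat \<Rightarrow> real) \<Rightarrow> bool" where
  "optimal N a T Ptot P \<longleftrightarrow> feasible N Ptot P \<and>
     (\<forall>Q. feasible N Ptot Q \<longrightarrow> J N a T P \<le> J N a T Q)"

definition Pbar :: "real \<Rightarrow> real \<Rightarrow> real" where
  "Pbar a t = (2 powr t - 1) / a"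

end

theory Submission
  imports Defs
begin

text \<open>If some \<open>P\<^sub>i\<close> exceeded \<open>Pbar\<^sub>i\<close>, lowering it to \<open>Pbar\<^sub>i\<close> would keep the allocation
  feasible and leave all other terms of \<open>J\<close> unchanged, while the \<open>i\<close>-th term, which is positive
  because \<open>r\<^sub>i\<close> is strictly increasing, would drop to \<open>0\<close>. This contradicts optimality.\<close>

lemma sum_fun_upd_eq:
  fixes h :: "'a \<Rightarrow> 'b \<Rightarrow> 'c::ab_group_add"
  assumes "finite A" and "k \<in> A"
  shows "(\<Sum>i\<in>A. h i ((f(k := x)) i)) = (\<Sum>i\<in>A. h i (f i)) - h k (f k) + h k x"
proof -
  have "(\<Sum>i\<in>A - {k}. h i ((f(k := x)) i)) = (\<Sum>i\<in>A - {k}. h i (f i))"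
    by (rule sum.cong) auto
  then show ?thesis
    using sum.remove[OF assms, of "\<lambda>i. h i ((f(k := x)) i)"] sum.remove[OF assms, of "\<lambda>i. h i (f i)"]
    by simp
qed

lemma J_fun_upd:
  assumes "k < N"
  shows "J N a T (P(k := x)) = J N a T P - (rate (a k) (P k) - T k)^2 + (rate (a k) x - T k)^2"
  unfolding J_def using assms sum_fun_upd_eq[of "{..<N}" k "\<lambda>i p. (rate (a i) p - T i)^2" P x]
  by simp

lemma feasible_fun_upd_decrease:
  assumes "feasible N Ptot P" and "k < N" and "0 \<le> x" and "x \<le> P k"
  shows "feasible N Ptot (P(k := x))"
proof -
  have "(\<Sum>i<N. (P(k := x)) i) = (\<Sum>i<N. P i) - P k + x"
    using assms(2) sum_fun_upd_eq[of "{..<N}" k "\<lambda>_ p. p" P x] by simp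
  with assms show ?thesis
    by (auto simp: feasible_def)
qed

lemma rate_Pbar: "0 < a \<Longrightarrow> rate a (Pbar a t) = t"
  by (simp add: rate_def Pbar_def)

lemma Pbar_nonneg:
  assumes "0 < a" and "0 \<le> t"
  shows "0 \<le> Pbar a t"
  using assms ge_one_powr_ge_zero[of 2 t] by (simp add: Pbar_def)

lemma rate_strict_mono:
  assumes "0 < a" and "0 \<le> p" and "p < q"
  shows "rate a p < rate a q"
proof -
  have "0 < 1 + a * p"
    using assms by (simp add: add_pos_nonneg)
  moreover have "1 + a * p < 1 + a * q"
    using assms by simp
  ultimately show ?thesis
    by (simp add: rate_def)
qed

theorem proposition1:
  fixes N :: nat and a T :: "nat \<Rightarrow> real" and Ptot :: real and Pstar :: "nat \<Rightarrow> real"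
  assumes "N \<ge> 1"
    and "\<forall>i<N. a i > 0"
    and "\<forall>i<N. T i \<ge> 0"
    and "Ptot > 0"
    and "optimal N a T Ptot Pstar"
  shows "\<forall>i<N. Pstar i \<le> Pbar (a i) (T i)"
proof (intro allI impI)
  fix k assume k: "k < N"
  have ak: "0 < a k" and Pbar_k: "0 \<le> Pbar (a k) (T k)"
    using k assms(2,3) Pbar_nonneg by auto
  show "Pstar k \<le> Pbar (a k) (T k)"
  proof (rule ccontr)
    assume "\<not> Pstar k \<le> Pbar (a k) (T k)"
    then have above: "Pbar (a k) (T k) < Pstar k" by simp
    define Q where "Q = Pstar(k := Pbar (a k) (T k))"
    have "feasible N Ptot Pstar"
      using assms(5) by (simp add: optimal_def)
    then have "feasible N Ptot Q"
      unfolding Q_def using k Pbar_k above by (simp add: feasible_fun_upd_decrease)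
    then have "J N a T Pstar \<le> J N a T Q"
      using assms(5) by (simp add: optimal_def)
    also have "\<dots> = J N a T Pstar - (rate (a k) (Pstar k) - T k)^2"
      unfolding Q_def using J_fun_upd[OF k] rate_Pbar[OF ak] by simp
    also have "\<dots> < J N a T Pstar"
      using rate_strict_mono[OF ak Pbar_k above] rate_Pbar[OF ak] by simp
    finally show False by simp
  qed
qed

end
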